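(* Let $\Delta$ be a finite, flag, simply connected simplicial complex, with $\mathcal{P}_H$, $q$, $T$, $p_n$, $L$, $w_e$ and $\Phi_n$ as in the context, and let $K$ be a constant such that $\mathrm{Area}_{\mathcal{P}_H}\big(p_n(q,\iota e)\,e^n\,p_n(\tau e,q)\big)\le K|n|^2$ for all $e\in\mathrm{Edge}(\Delta)$ and $n\in\mathbb{Z}$. Then for all $e\in\mathrm{Edge}(\Delta)$ and $n\in\mathbb{Z}$, $\mathrm{Area}_{\mathcal{P}_H}\big(\Phi_{n+1}(e)\,\Phi_n(w_e)^{-1}\big)\le 2K|n|^2+(3L^2+2L+2K)|n|+L+K$.
   Context: $\mathrm{Edge}(\Delta)$ is the set of directed edges of $\Delta$; for $e$ in it, $\iota e$, $\tau e$ are its initial and terminal vertices and $\overline{e}$ is the reversed edge. $e_1\cdot\ldots\cdot e_l$ is a combinatorial path if $\tau e_i=\iota e_{i+1}$, and a combinatorial 1-cycle if also $\tau e_l=\iota e_1$. $\mathcal{P}_H=\langle\mathrm{Edge}(\Delta)\mid\mathcal{R}_H\rangle$ where $\mathcal{R}_H$ consists of the words $e\overline{e}$ ($e\in\mathrm{Edge}(\Delta)$) and $efg$, $e^{-1}f^{-1}g^{-1}$ for every combinatorial 1-cycle $e\cdot f\cdot g$. $\mathrm{Area}_{\mathcal{P}_H}(w)$ is the least $m$ such that $w$ is freely equal to $\prod_{i=1}^m x_ir_ix_i^{-1}$ with $r_i\in\mathcal{R}_H^{\pm1}$. For a letter $e$ and $k\in\mathbb{Z}$, $e^k$ is the word of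 $k$ copies of $e$ if $k\ge0$ and $|k|$ copies of $e^{-1}$ if $k<0$. Fix a vertex $q$ and a spanning tree $T$ of the 1-skeleton of $\Delta$; $p_n(u,v)=e_1^n\cdots e_l^n$ where $e_1\cdot\ldots\cdot e_l$ is the unique geodesic combinatorial path in $T$ from $u$ to $v$, and $p(u,v)=p_1(u,v)$. For $e\in\mathrm{Edge}(\Delta)$, $w_e=p(q,\iota e)\,e\,p(\iota e,q)$. $L$ is the maximum over vertices $u,v$ of their edge-path distance in $T$. $\Phi_n$ ($n\in\mathbb{Z}$) is the endomorphism of the free monoid on $\mathrm{Edge}(\Delta)^{\pm1}$ with $\Phi_n(e)=p_n(q,\iota e)\,e^{n+1}\,p_n(\tau e,q)$ and $\Phi_n(e^{-1})=\Phi_n(e)^{-1}$ (formal inverse word). *)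

theory Defs
  imports "HOL-Analysis.Analysis" "HOL-Library.Extended_Real"
begin

text \<open>A simplicial complex on vertex type 'v is a set of nonempty finite vertex sets,
closed under nonempty subsets. Since 'v is required to be finite below, the complex is finite.\<close>

definition simplicial_complex :: "'v set set \<Rightarrow> bool" where
  "simplicial_complex \<Delta> \<longleftrightarrow>
     (\<forall>\<sigma>\<in>\<Delta>. finite \<sigma> \<and> \<sigma> \<noteq> {} \<and> (\<forall>\<tau>. \<tau> \<subseteq> \<sigma> \<and> \<tau> \<noteq> {} \<longrightarrow> \<tau> \<in> \<Delta>))"

definition vertices :: "'v set set \<Rightarrow> 'v set" where
  "vertices \<Delta> = \<Union>\<Delta>"

definition flag :: "'v set set \<Rightarrow> bool" where
  "flag \<Delta> \<longleftrightarrow>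
     (\<forall>\<sigma>. finite \<sigma> \<and> \<sigma> \<noteq> {} \<and> \<sigma> \<subseteq> vertices \<Delta> \<and>
          (\<forall>u\<in>\<sigma>. \<forall>v\<in>\<sigma>. u \<noteq> v \<longrightarrow> {u, v} \<in> \<Delta>) \<longrightarrow> \<sigma> \<in> \<Delta>)"

definition realization :: "('v::finite) set set \<Rightarrow> (real ^ 'v) set" where
  "realization \<Delta> = {x. (\<forall>i. 0 \<le> x $ i) \<and> (\<Sum>i\<in>UNIV. x $ i) = 1 \<and> {i. x $ i \<noteq> 0} \<in> \<Delta>}"

definition Edge :: "'v set set \<Rightarrow> ('v \<times> 'v) set" where
  "Edge \<Delta> = {(u, v). u \<noteq> v \<and> {u, v} \<in> \<Delta>}"

abbreviation iota :: "'v \<times> 'v \<Rightarrow> 'v" where "iota e \<equiv> fst e"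
abbreviation tau :: "'v \<times> 'v \<Rightarrow> 'v" where "tau e \<equiv> snd e"
abbreviation rev_edge :: "'v \<times> 'v \<Rightarrow> 'v \<times> 'v" where "rev_edge e \<equiv> prod.swap e"

fun cpath :: "('v \<times> 'v) set \<Rightarrow> 'v \<Rightarrow> 'v \<Rightarrow> ('v \<times> 'v) list \<Rightarrow> bool" where
  "cpath E u v [] = (u = v)"
| "cpath E u v (e # es) = (e \<in> E \<and> iota e = u \<and> cpath E (tau e) v es)"

definition tree_edges :: "'v set set \<Rightarrow> ('v \<times> 'v) set" where
  "tree_edges T = {(u, v). u \<noteq> v \<and> {u, v} \<in> T}"

definition spanning_tree :: "'v set set \<Rightarrow> 'v set set \<Rightarrow> bool" where
  "spanning_tree \<Delta> T \<longleftrightarrow>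
     T \<subseteq> {\<sigma> \<in> \<Delta>. card \<sigma> = 2} \<and>
     (\<forall>u\<in>vertices \<Delta>. \<forall>v\<in>vertices \<Delta>. \<exists>es. cpath (tree_edges T) u v es) \<and>
     \<comment> \<open>acyclic: no simple cycle of length at least 3\<close>
     (\<nexists>u es. 3 \<le> length es \<and> cpath (tree_edges T) u u es \<and> distinct (map iota es))"

definition tgeod :: "'v set set \<Rightarrow> 'v \<Rightarrow> 'v \<Rightarrow> ('v \<times> 'v) list" where
  "tgeod T u v = (THE es. cpath (tree_edges T) u v es \<and>
       (\<forall>es'. cpath (tree_edges T) u v es' \<longrightarrow> length es \<le> length es'))"

definition Ldiam :: "'v set set \<Rightarrow> 'v set set \<Rightarrow> nat" where
  "Ldiam \<Delta> T = Max {length (tgeod T u v) | u v. u \<in> vertices \<Delta> \<and> v \<in> vertices \<Delta>}"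

text \<open>A letter (e, True) is e, a letter (e, False) is e^{-1}.\<close>
type_synonym 'v letter = "('v \<times> 'v) \<times> bool"

definition inv_letter :: "'v letter \<Rightarrow> 'v letter" where
  "inv_letter a = (fst a, \<not> snd a)"

definition inv_word :: "'v letter list \<Rightarrow> 'v letter list" where
  "inv_word w = rev (map inv_letter w)"

definition lpow :: "'v \<times> 'v \<Rightarrow> int \<Rightarrow> 'v letter list" where
  "lpow e k = (if 0 \<le> k then replicate (nat k) (e, True) else replicate (nat (- k)) (e, False))"

definition free_step :: "'v letter list \<Rightarrow> 'v letter list \<Rightarrow> bool" where
  "free_step w w' \<longleftrightarrow> (\<exists>xs ys a. w = xs @ [a, inv_letter a] @ ys \<and> w' = xs @ ys)"

definition freely_equal :: "'v letter list \<Rightarrow> 'v letter list \<Rightarrow> bool" where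
  "freely_equal = (sup free_step free_step\<inverse>\<inverse>)\<^sup>*\<^sup>*"

definition RH :: "'v set set \<Rightarrow> 'v letter list set" where
  "RH \<Delta> =
     {[(e, True), (rev_edge e, True)] | e. e \<in> Edge \<Delta>} \<union>
     {[(e, True), (f, True), (g, True)] | e f g. e \<in> Edge \<Delta> \<and> f \<in> Edge \<Delta> \<and> g \<in> Edge \<Delta> \<and>
         tau e = iota f \<and> tau f = iota g \<and> tau g = iota e} \<union>
     {[(e, False), (f, False), (g, False)] | e f g. e \<in> Edge \<Delta> \<and> f \<in> Edge \<Delta> \<and> g \<in> Edge \<Delta> \<and>
         tau e = iota f \<and> tau f = iota g \<and> tau g = iota e}"

text \<open>Area: least m such that w is freely equal to a product of m conjugates of
relators or their inverses; \<infinity> if there is no such m.\<close>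
definition Area :: "'v letter list set \<Rightarrow> 'v letter list \<Rightarrow> enat" where
  "Area R w = (INF m \<in> {m. \<exists>xs rs. length xs = m \<and> length rs = m \<and>
        (\<forall>r\<in>set rs. r \<in> R \<or> inv_word r \<in> R) \<and>
        freely_equal w (concat (map (\<lambda>(x, r). x @ r @ inv_word x) (zip xs rs)))}. enat m)"

definition pn :: "'v set set \<Rightarrow> int \<Rightarrow> 'v \<Rightarrow> 'v \<Rightarrow> 'v letter list" where
  "pn T n u v = concat (map (\<lambda>e. lpow e n) (tgeod T u v))"

definition we :: "'v set set \<Rightarrow> 'v \<Rightarrow> 'v \<times> 'v \<Rightarrow> 'v letter list" where
  "we T q e = pn T 1 q (iota e) @ [(e, True)] @ pn T 1 (iota e) q"

definition Phi_letter :: "'v set set \<Rightarrow> 'v \<Rightarrow> int \<Rightarrow> 'v letter \<Rightarrow> 'v letter list" where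
  "Phi_letter T q n a =
     (let w = pn T n q (iota (fst a)) @ lpow (fst a) (n + 1) @ pn T n (tau (fst a)) q
      in if snd a then w else inv_word w)"

definition Phi :: "'v set set \<Rightarrow> 'v \<Rightarrow> int \<Rightarrow> 'v letter list \<Rightarrow> 'v letter list" where
  "Phi T q n w = concat (map (Phi_letter T q n) w)"

end

theory Submission
  imports Defs
begin

text \<open>
  Measure the cost of replacing a word by another by the area of their quotient; this is a
  pseudometric on words which ignores free reductions and is invariant under multiplication on
  either side. Let A_m be the word obtained by raising each edge of the tree geodesic from q to
  the initial vertex of e (of length k \<le> L) to the m-th power, and B_m the same for the reversed
  geodesic. Cancelling f^-m f^m costs |m| relators f f^-1, so B_m A_m has area at most k|m|,
  and induction along the geodesic moves Phi_n(A_1) to A_(n+1) B_n and Phi_n(B_1) to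
  A_n B_(n+1) at cost k^2 |n| each. After these moves both Phi_n(w_e) and Phi_(n+1)(e) reduce
  to A_(n+1) e A_(n+1)^-1, using the hypothesis once at n and once at n + 1; adding up the
  costs gives the bound.
\<close>

lemma inv_letter_inv_letter [simp]: "inv_letter (inv_letter a) = a"
  by (simp add: inv_letter_def)

lemma inv_word_Nil [simp]: "inv_word [] = []"
  and inv_word_append [simp]: "inv_word (u @ v) = inv_word v @ inv_word u"
  and inv_word_Cons [simp]: "inv_word (a # w) = inv_word w @ [inv_letter a]"
  and inv_word_inv_word [simp]: "inv_word (inv_word w) = w"
  by (simp_all add: inv_word_def rev_map[symmetric] comp_def)

lemma inv_word_concat: "inv_word (concat ws) = concat (rev (map inv_word ws))"
  by (induction ws) auto

lemma freely_equal_refl [simp]: "freely_equal w w"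
  by (simp add: freely_equal_def)

lemma freely_equal_trans [trans]: "freely_equal u v \<Longrightarrow> freely_equal v w \<Longrightarrow> freely_equal u w"
  unfolding freely_equal_def by (rule rtranclp_trans)

lemma freely_equal_sym: "freely_equal w w' \<Longrightarrow> freely_equal w' w"
  unfolding freely_equal_def symclp_pointfree[symmetric] by (rule rtranclp_symclp_sym)

lemma freely_equal_map:
  assumes "\<And>u u'. free_step u u' \<Longrightarrow> free_step (f u) (f u')" and "freely_equal w w'"
  shows "freely_equal (f w) (f w')"
proof -
  have "(sup free_step free_step\<inverse>\<inverse>) (f u) (f u')"
    if "(sup free_step free_step\<inverse>\<inverse>) u u'" for u u'
    using that assms(1) by auto
  with assms(2) show ?thesis
    unfolding freely_equal_def
    by (induction rule: rtranclp_induct) (auto intro: rtranclp.rtrancl_into_rtrancl)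
qed

lemma free_step_context: "free_step w w' \<Longrightarrow> free_step (x @ w @ y) (x @ w' @ y)"
  unfolding free_step_def by (clarify, rule exI[of _ "x @ _"], rule exI[of _ "_ @ y"]) auto

lemma freely_equal_context: "freely_equal w w' \<Longrightarrow> freely_equal (x @ w @ y) (x @ w' @ y)"
  by (rule freely_equal_map[of "\<lambda>w. x @ w @ y", OF free_step_context])

lemma freely_equal_append:
  "freely_equal u u' \<Longrightarrow> freely_equal v v' \<Longrightarrow> freely_equal (u @ v) (u' @ v')"
  using freely_equal_context[of u u' "[]" v] freely_equal_context[of v v' u' "[]"]
  by (auto intro: freely_equal_trans)

lemma free_step_inv_word:
  assumes "free_step w w'" shows "free_step (inv_word w) (inv_word w')"
proof -
  from assms obtain xs ys a where "w = xs @ [a, inv_letter a] @ ys" "w' = xs @ ys"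
    unfolding free_step_def by blast
  then have "inv_word w = inv_word ys @ [a, inv_letter a] @ inv_word xs"
    and "inv_word w' = inv_word ys @ inv_word xs"
    by simp_all
  then show ?thesis unfolding free_step_def by blast
qed

lemma freely_equal_inv_word: "freely_equal w w' \<Longrightarrow> freely_equal (inv_word w) (inv_word w')"
  by (rule freely_equal_map[OF free_step_inv_word])

lemma freely_equal_cancel: "freely_equal (x @ w @ inv_word w @ y) (x @ y)"
proof (induction w arbitrary: x y)
  case Nil
  then show ?case by simp
next
  case (Cons a w)
  have "free_step (x @ [a, inv_letter a] @ y) (x @ y)"
    unfolding free_step_def by blast
  then have "freely_equal (x @ [a, inv_letter a] @ y) (x @ y)"
    unfolding freely_equal_def by auto
  with Cons.IH[of "x @ [a]" "inv_letter a # y"] show ?case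
    by (auto intro: freely_equal_trans)
qed

lemma freely_equal_cancel': "freely_equal (x @ inv_word w @ w @ y) (x @ y)"
  using freely_equal_cancel[of x "inv_word w" y] by simp

lemma freely_equal_lpow_succ: "freely_equal (lpow e (k + 1) @ inv_word (lpow e k)) [(e, True)]"
proof (cases "0 \<le> k")
  case True
  then have "lpow e (k + 1) = [(e, True)] @ lpow e k"
    by (simp add: lpow_def nat_add_distrib)
  then show ?thesis
    using freely_equal_cancel[of "[(e, True)]" "lpow e k" "[]"] by simp
next
  case False
  then have "nat (- k) = Suc (nat (- (k + 1)))" and "lpow e (k + 1) = replicate (nat (- (k + 1))) (e, False)"
    by (auto simp: lpow_def)
  with False have "lpow e k = (e, False) # lpow e (k + 1)"
    by (simp add: lpow_def)
  then show ?thesis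
    using freely_equal_cancel[of "[]" "lpow e (k + 1)" "[(e, True)]"] by (simp add: inv_letter_def)
qed

section \<open>Dehn area\<close>

definition area_witness :: "'v letter list set \<Rightarrow> 'v letter list \<Rightarrow> nat \<Rightarrow> bool" where
  "area_witness R w m \<longleftrightarrow> (\<exists>xs rs. length xs = m \<and> length rs = m \<and>
        (\<forall>r\<in>set rs. r \<in> R \<or> inv_word r \<in> R) \<and>
        freely_equal w (concat (map (\<lambda>(x, r). x @ r @ inv_word x) (zip xs rs))))"

lemma Area_eq_INF: "Area R w = (INF m \<in> {m. area_witness R w m}. enat m)"
  unfolding Area_def area_witness_def by simp

lemma Area_le_enat: "area_witness R w m \<Longrightarrow> Area R w \<le> enat m"
  unfolding Area_eq_INF by (auto intro: INF_lower2)

lemma area_witness_Area: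
  assumes "Area R w = enat a" shows "area_witness R w a"
proof -
  let ?S = "enat ` {m. area_witness R w m}"
  have "?S \<noteq> {}"
    using assms unfolding Area_eq_INF by (auto simp: top_enat_def simp del: image_is_empty)
  then have "Inf ?S \<in> ?S"
    by (auto intro: wellorder_InfI)
  with assms show ?thesis
    unfolding Area_eq_INF by auto
qed

lemma Area_le_by_witnesses:
  "(\<And>m. area_witness R w m \<Longrightarrow> area_witness R w' m) \<Longrightarrow> Area R w' \<le> Area R w"
  unfolding Area_eq_INF by (rule INF_superset_mono) auto

lemma area_witness_freely_equal:
  assumes "freely_equal w w'" and "area_witness R w' m" shows "area_witness R w m"
proof -
  from assms(2) obtain xs rs where "length xs = m" "length rs = m"
    "\<forall>r\<in>set rs. r \<in> R \<or> inv_word r \<in> R"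
    "freely_equal w' (concat (map (\<lambda>(x, r). x @ r @ inv_word x) (zip xs rs)))"
    unfolding area_witness_def by blast
  with assms(1) show ?thesis
    unfolding area_witness_def by (blast intro: freely_equal_trans)
qed

lemma Area_freely_equal:
  assumes "freely_equal w w'" shows "Area R w = Area R w'"
proof -
  have "Area R w \<le> Area R w'" if "freely_equal w w'" for w w'
    using that by (intro Area_le_by_witnesses) (rule area_witness_freely_equal)
  with assms freely_equal_sym show ?thesis
    by (blast intro: antisym)
qed

lemma area_witness_append:
  assumes "area_witness R u m" "area_witness R v k"
  shows "area_witness R (u @ v) (m + k)"
proof -
  obtain xs rs ys ss where
    "length xs = m" "length rs = m" "\<forall>r\<in>set rs. r \<in> R \<or> inv_word r \<in> R"
    "freely_equal u (concat (map (\<lambda>(x, r). x @ r @ inv_word x) (zip xs rs)))"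
    "length ys = k" "length ss = k" "\<forall>r\<in>set ss. r \<in> R \<or> inv_word r \<in> R"
    "freely_equal v (concat (map (\<lambda>(x, r). x @ r @ inv_word x) (zip ys ss)))"
    using assms unfolding area_witness_def by blast
  then show ?thesis
    unfolding area_witness_def
    by (intro exI[of _ "xs @ ys"] exI[of _ "rs @ ss"]) (auto simp: zip_append freely_equal_append)
qed

lemma Area_append_le: "Area R (u @ v) \<le> Area R u + Area R v"
proof (cases "Area R u" "Area R v" rule: enat2_cases)
  case (enat_enat a b)
  then show ?thesis
    by (metis Area_le_enat area_witness_Area area_witness_append plus_enat_simps(1))
qed simp_all

lemma freely_equal_conj_concat:
  "freely_equal (x @ concat (map (\<lambda>(y, r). y @ r @ inv_word y) yrs) @ inv_word x)
                (concat (map (\<lambda>(y, r). y @ r @ inv_word y) (map (\<lambda>(y, r). (x @ y, r)) yrs)))"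
proof (induction yrs)
  case Nil
  then show ?case using freely_equal_cancel[of "[]" x "[]"] by simp
next
  case (Cons yr yrs)
  obtain y r where yr: "yr = (y, r)" by fastforce
  let ?P = "x @ y @ r @ inv_word y"
  let ?C = "concat (map (\<lambda>(y, r). y @ r @ inv_word y) yrs)"
  have "freely_equal (?P @ ?C @ inv_word x) (?P @ inv_word x @ x @ ?C @ inv_word x)"
    using freely_equal_sym[OF freely_equal_cancel'[of ?P x "?C @ inv_word x"]] by simp
  also have "freely_equal \<dots> ((?P @ inv_word x) @ concat (map (\<lambda>(y, r). y @ r @ inv_word y)
                                  (map (\<lambda>(y, r). (x @ y, r)) yrs)) @ [])"
    using freely_equal_context[OF Cons.IH, of "?P @ inv_word x" "[]"] by simp
  finally show ?case using yr by simp
qed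

lemma Area_conj_le: "Area R (x @ w @ inv_word x) \<le> Area R w"
proof (rule Area_le_by_witnesses)
  fix m assume "area_witness R w m"
  then obtain xs rs where "length xs = m" "length rs = m"
    "\<forall>r\<in>set rs. r \<in> R \<or> inv_word r \<in> R"
    and w: "freely_equal w (concat (map (\<lambda>(y, r). y @ r @ inv_word y) (zip xs rs)))"
    unfolding area_witness_def by blast
  moreover have "freely_equal (x @ w @ inv_word x)
      (concat (map (\<lambda>(y, r). y @ r @ inv_word y) (zip (map ((@) x) xs) rs)))"
    using freely_equal_trans[OF freely_equal_context[OF w] freely_equal_conj_concat]
    by (simp add: zip_map1 comp_def case_prod_beta)
  ultimately show "area_witness R (x @ w @ inv_word x) m"
    unfolding area_witness_def by (intro exI[of _ "map ((@) x) xs"] exI[of _ rs]) auto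
qed

lemma Area_inv_word_le: "Area R (inv_word w) \<le> Area R w"
proof (rule Area_le_by_witnesses)
  fix m assume "area_witness R w m"
  then obtain xs rs where len: "length xs = m" "length rs = m"
    and rel: "\<forall>r\<in>set rs. r \<in> R \<or> inv_word r \<in> R"
    and w: "freely_equal w (concat (map (\<lambda>(x, r). x @ r @ inv_word x) (zip xs rs)))"
    unfolding area_witness_def by blast
  have "inv_word (concat (map (\<lambda>(x, r). x @ r @ inv_word x) (zip xs rs)))
      = concat (map (\<lambda>(x, r). x @ r @ inv_word x) (zip (rev xs) (rev (map inv_word rs))))"
    using len by (simp add: inv_word_concat rev_map[symmetric] zip_rev zip_map2 comp_def case_prod_beta)
  with freely_equal_inv_word[OF w] len rel show "area_witness R (inv_word w) m"
    unfolding area_witness_def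
    by (intro exI[of _ "rev xs"] exI[of _ "rev (map inv_word rs)"]) auto
qed

lemma Area_inv_word [simp]: "Area R (inv_word w) = Area R w"
  using Area_inv_word_le[of R w] Area_inv_word_le[of R "inv_word w"] by simp

lemma Area_Nil [simp]: "Area R [] = 0"
proof -
  have "area_witness R [] 0"
    unfolding area_witness_def by simp
  then show ?thesis
    using Area_le_enat[of R "[]" 0] by (simp flip: zero_enat_def)
qed

lemma Area_relator: "r \<in> R \<Longrightarrow> Area R r \<le> 1"
proof -
  assume "r \<in> R"
  then have "area_witness R r 1"
    unfolding area_witness_def by (intro exI[of _ "[[]]"] exI[of _ "[r]"]) simp
  then show ?thesis
    using Area_le_enat by (fastforce simp: one_enat_def)
qed

lemma Area_insert_le: "Area R (x @ r @ y) \<le> Area R r + Area R (x @ y)"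
proof -
  have "Area R (x @ r @ y) = Area R ((x @ r @ inv_word x) @ (x @ y))"
    using freely_equal_sym[OF freely_equal_cancel'[of "x @ r" x y]]
    by (intro Area_freely_equal) simp
  also have "\<dots> \<le> Area R (x @ r @ inv_word x) + Area R (x @ y)"
    by (rule Area_append_le)
  also have "\<dots> \<le> Area R r + Area R (x @ y)"
    using Area_conj_le by (rule add_right_mono)
  finally show ?thesis .
qed

lemma Area_rotate: "Area R (x @ y) = Area R (y @ x)"
proof -
  have "Area R (y @ x) \<le> Area R (x @ y)" for x y
  proof -
    have "Area R (y @ x) = Area R (inv_word x @ (x @ y) @ inv_word (inv_word x))"
      using freely_equal_sym[OF freely_equal_cancel'[of "[]" x "y @ x"]]
      by (intro Area_freely_equal) simp
    also have "\<dots> \<le> Area R (x @ y)"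
      by (rule Area_conj_le)
    finally show ?thesis .
  qed
  then show ?thesis by (blast intro: antisym)
qed

lemma Area_replicate_pair:
  assumes "Area R [a, b] \<le> 1" shows "Area R (replicate m a @ replicate m b) \<le> enat m"
proof (induction m)
  case 0
  then show ?case by (simp add: zero_enat_def[symmetric])
next
  case (Suc m)
  have "Area R (replicate (Suc m) a @ replicate (Suc m) b)
      = Area R (replicate m a @ [a, b] @ replicate m b)"
    by (simp add: replicate_append_same[symmetric])
  also have "\<dots> \<le> Area R [a, b] + Area R (replicate m a @ replicate m b)"
    by (rule Area_insert_le)
  also have "\<dots> \<le> 1 + enat m"
    using assms Suc.IH by (rule add_mono)
  finally show ?case
    by (simp add: one_enat_def)
qed

section \<open>Distance in area\<close>

definition area_dist :: "'v letter list set \<Rightarrow> 'v letter list \<Rightarrow> 'v letter list \<Rightarrow> enat" where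
  "area_dist R w w' = Area R (w @ inv_word w')"

lemma area_dist_Nil [simp]: "area_dist R w [] = Area R w"
  by (simp add: area_dist_def)

lemma area_dist_sym: "area_dist R w w' = area_dist R w' w"
  unfolding area_dist_def by (metis Area_inv_word inv_word_append inv_word_inv_word)

lemma area_dist_triangle: "area_dist R u w \<le> area_dist R u v + area_dist R v w"
proof -
  have "area_dist R u w = Area R ((u @ inv_word v) @ (v @ inv_word w))"
    unfolding area_dist_def
    using freely_equal_sym[OF freely_equal_cancel'[of u v "inv_word w"]]
    by (intro Area_freely_equal) simp
  then show ?thesis
    unfolding area_dist_def by (simp only: Area_append_le)
qed

lemma area_dist_trans:
  "area_dist R u v \<le> a \<Longrightarrow> area_dist R v w \<le> b \<Longrightarrow> area_dist R u w \<le> a + b"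
  by (meson add_mono area_dist_triangle order_trans)

lemma area_dist_context: "area_dist R (x @ w @ y) (x @ w' @ y) \<le> area_dist R w w'"
proof -
  have "area_dist R (x @ w @ y) (x @ w' @ y) = Area R (x @ (w @ inv_word w') @ inv_word x)"
    unfolding area_dist_def
    using freely_equal_cancel[of "x @ w" y "inv_word w' @ inv_word x"]
    by (intro Area_freely_equal) simp
  also have "\<dots> \<le> area_dist R w w'"
    unfolding area_dist_def by (rule Area_conj_le)
  finally show ?thesis .
qed

lemma area_dist_context_le:
  "area_dist R w w' \<le> a \<Longrightarrow> area_dist R (x @ w @ y) (x @ w' @ y) \<le> a"
  using area_dist_context order_trans by blast

lemma area_dist_sandwich_le:
  assumes "area_dist R u u' \<le> a" and "area_dist R v v' \<le> b"
  shows "area_dist R (u @ w @ v) (u' @ w @ v') \<le> a + b"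
proof -
  have "area_dist R (u @ w @ v) (u' @ w @ v) \<le> a"
    using area_dist_context_le[OF assms(1), of "[]" "w @ v"] by simp
  moreover have "area_dist R (u' @ w @ v) (u' @ w @ v') \<le> b"
    using area_dist_context_le[OF assms(2), of "u' @ w" "[]"] by simp
  ultimately show ?thesis
    by (rule area_dist_trans)
qed

lemma area_dist_freely_equal: "freely_equal w w' \<Longrightarrow> area_dist R w w' = 0"
proof -
  assume "freely_equal w w'"
  then have "freely_equal (w @ inv_word w') (w' @ inv_word w')"
    using freely_equal_context[of w w' "[]" "inv_word w'"] by simp
  also have "freely_equal \<dots> []"
    using freely_equal_cancel[of "[]" w' "[]"] by simp
  finally show ?thesis
    unfolding area_dist_def using Area_freely_equal by fastforce
qed

text \<open>The factor \<open>c @ a\<close> is traded for \<open>inv_word (lpow e k)\<close> at the cost of a cyclic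
  conjugate of \<open>a @ lpow e k @ c\<close>; what remains reduces freely.\<close>

lemma area_dist_lpow_shift:
  "area_dist R (x @ lpow e (k + 1) @ c @ a @ y) (x @ [(e, True)] @ y) \<le> Area R (a @ lpow e k @ c)"
proof -
  have "area_dist R (c @ a) (inv_word (lpow e k)) = Area R (a @ lpow e k @ c)"
    unfolding area_dist_def using Area_rotate[of R "c @ a" "lpow e k"] Area_rotate[of R a "lpow e k @ c"]
    by simp
  then have "area_dist R (x @ lpow e (k + 1) @ c @ a @ y)
               (x @ lpow e (k + 1) @ inv_word (lpow e k) @ y) \<le> Area R (a @ lpow e k @ c)"
    using area_dist_context_le[of R "c @ a" _ _ "x @ lpow e (k + 1)" y] by simp
  moreover have "area_dist R (x @ lpow e (k + 1) @ inv_word (lpow e k) @ y) (x @ [(e, True)] @ y) = 0"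
    using area_dist_freely_equal freely_equal_context[OF freely_equal_lpow_succ] by fastforce
  ultimately show ?thesis
    using area_dist_trans[of R _ _ _ _ 0] by fastforce
qed

section \<open>Geodesics in a tree\<close>

definition rev_path :: "('v \<times> 'v) list \<Rightarrow> ('v \<times> 'v) list" where
  "rev_path es = rev (map prod.swap es)"

lemma rev_path_Nil [simp]: "rev_path [] = []"
  and rev_path_append [simp]: "rev_path (xs @ ys) = rev_path ys @ rev_path xs"
  and rev_path_Cons [simp]: "rev_path (e # es) = rev_path es @ [prod.swap e]"
  and length_rev_path [simp]: "length (rev_path es) = length es"
  by (simp_all add: rev_path_def)

lemma rev_path_rev_path [simp]: "rev_path (rev_path es) = es"
  by (induction es) auto

lemma map_fst_rev_path: "map fst (rev_path es) = rev (map snd es)"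
  by (induction es) auto

lemma cpath_append: "cpath E u v (xs @ ys) \<longleftrightarrow> (\<exists>w. cpath E u w xs \<and> cpath E w v ys)"
  by (induction xs arbitrary: u) auto

lemma cpath_last: "cpath E u v es \<Longrightarrow> last (u # map snd es) = v"
  by (induction es arbitrary: u) auto

lemma cpath_prefix: "cpath E u v (xs @ ys) \<Longrightarrow> cpath E u (last (u # map snd xs)) xs"
  by (induction xs arbitrary: u) auto

lemma cpath_map_fst: "cpath E u v es \<Longrightarrow> map fst es = butlast (u # map snd es)"
  by (induction es arbitrary: u) auto

lemma cpath_set: "cpath E u v es \<Longrightarrow> set es \<subseteq> E"
  by (induction es arbitrary: u) auto

lemma cpath_rev_path:
  assumes "\<And>e. e \<in> E \<Longrightarrow> prod.swap e \<in> E"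
  shows "cpath E u v es \<Longrightarrow> cpath E v u (rev_path es)"
  by (induction es arbitrary: u) (auto simp: cpath_append assms)

lemma cpath_take_drop:
  assumes "cpath E u v es" "i \<le> length es"
  shows "cpath E u ((u # map snd es) ! i) (take i es)"
    and "cpath E ((u # map snd es) ! i) v (drop i es)"
  using assms by (induction es arbitrary: u i) (auto simp: nth_Cons split: nat.splits)

definition geodesic :: "('v \<times> 'v) set \<Rightarrow> 'v \<Rightarrow> 'v \<Rightarrow> ('v \<times> 'v) list \<Rightarrow> bool" where
  "geodesic E u v es \<longleftrightarrow> cpath E u v es \<and> (\<forall>es'. cpath E u v es' \<longrightarrow> length es \<le> length es')"

lemma geodesic_exists: "cpath E u v es \<Longrightarrow> \<exists>P. geodesic E u v P"
  unfolding geodesic_def by (metis ex_has_least_nat)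

lemma geodesic_distinct:
  assumes g: "geodesic E u v es" shows "distinct (u # map snd es)"
proof (rule ccontr)
  let ?vs = "u # map snd es"
  assume "\<not> distinct ?vs"
  then obtain i j where ij: "i < j" "j \<le> length es" "?vs ! i = ?vs ! j"
    unfolding distinct_conv_nth by (metis length_Cons length_map less_Suc_eq_le nat_neq_iff)
  have c: "cpath E u v es"
    using g unfolding geodesic_def by blast
  have "cpath E u v (take i es @ drop j es)"
    using cpath_take_drop[OF c, of i] cpath_take_drop[OF c ij(2)] ij
    unfolding cpath_append by auto
  with g have "length es \<le> length (take i es @ drop j es)"
    unfolding geodesic_def by blast
  with ij show False by simp
qed

lemma geodesic_append:
  assumes g: "geodesic E u v (xs @ ys)" and c: "cpath E u w xs"
  shows "geodesic E u w xs" and "geodesic E w v ys"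
proof -
  obtain w' where "cpath E u w' xs" "cpath E w' v ys"
    using g unfolding geodesic_def cpath_append by blast
  then have cy: "cpath E w v ys"
    using c by (metis cpath_last)
  show "geodesic E u w xs"
    unfolding geodesic_def
  proof (intro conjI allI impI)
    fix es' assume "cpath E u w es'"
    then have "cpath E u v (es' @ ys)"
      using cy unfolding cpath_append by blast
    then show "length xs \<le> length es'"
      using g unfolding geodesic_def by fastforce
  qed (rule c)
  show "geodesic E w v ys"
    unfolding geodesic_def
  proof (intro conjI allI impI)
    fix es' assume "cpath E w v es'"
    then have "cpath E u v (xs @ es')"
      using c unfolding cpath_append by blast
    then show "length ys \<le> length es'"
      using g unfolding geodesic_def by fastforce
  qed (rule cy)
qed

lemma geodesic_rev_path:
  assumes "\<And>e. e \<in> E \<Longrightarrow> prod.swap e \<in> E" and "geodesic E u v es"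
  shows "geodesic E v u (rev_path es)"
  using assms(2) cpath_rev_path[OF assms(1)] unfolding geodesic_def
  by (metis length_rev_path rev_path_rev_path)

text \<open>Follow the first path until it first hits a vertex of the second one, then return along
  the second path.\<close>

lemma simple_cycle_of_branching_paths:
  assumes swap_closed: "\<And>e. e \<in> E \<Longrightarrow> prod.swap e \<in> E"
    and cP: "cpath E u v (p # P)" and dP: "distinct (u # map snd (p # P))"
    and cQ: "cpath E u v (q # Q)" and dQ: "distinct (u # map snd (q # Q))"
    and "p \<noteq> q"
  shows "\<exists>w es. 3 \<le> length es \<and> cpath E w w es \<and> distinct (map fst es)"
proof -
  let ?vQ = "map snd (q # Q)"
  have "last ?vQ = v" and "snd (last (p # P)) = v"
    using cpath_last[OF cQ] cpath_last[OF cP] by (simp_all add: last_map split: if_splits)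
  moreover have "last ?vQ \<in> set ?vQ"
    by (rule last_in_set) simp
  ultimately have "\<exists>y\<in>set (p # P). snd y \<in> set ?vQ"
    by (intro bexI[of _ "last (p # P)"]) simp_all
  then obtain P1 p' P2 where sp: "p # P = P1 @ p' # P2" "snd p' \<in> set ?vQ"
      and P1_off_Q: "\<forall>y\<in>set P1. snd y \<notin> set ?vQ"
    by (rule split_list_first_propE)
  then obtain q' where "q' \<in> set (q # Q)" and q': "snd q' = snd p'"
    by (metis imageE list.set_map)
  then obtain Q1 Q2 where sq: "q # Q = Q1 @ q' # Q2"
    by (meson split_list)
  let ?C = "(P1 @ [p']) @ rev_path (Q1 @ [q'])"
  have cP1: "cpath E u (snd p') (P1 @ [p'])"
    using cpath_prefix[of E u v "P1 @ [p']" P2] cP unfolding sp(1) by simp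
  have cQ1: "cpath E u (snd p') (Q1 @ [q'])"
    using cpath_prefix[of E u v "Q1 @ [q']" Q2] cQ q' unfolding sq by simp
  have cyc: "cpath E u u ?C"
    using cP1 cpath_rev_path[OF swap_closed cQ1] unfolding cpath_append by blast
  have "map fst ?C = (u # map snd P1) @ rev (map snd (Q1 @ [q']))"
    using cpath_map_fst[OF cP1] by (simp add: map_fst_rev_path)
  moreover have "distinct (u # map snd P1)"
    using dP unfolding sp(1) by simp
  moreover have "distinct (map snd (Q1 @ [q']))"
    using dQ unfolding sq by simp
  moreover have "set (u # map snd P1) \<inter> set (map snd (Q1 @ [q'])) = {}"
  proof -
    have "set (map snd (Q1 @ [q'])) \<subseteq> set ?vQ" and "u \<notin> set ?vQ"
      using dQ unfolding sq by auto
    with P1_off_Q show ?thesis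
      by (simp only: list.set_map list.set) blast
  qed
  ultimately have "distinct (map fst ?C)"
    by (simp only: distinct_append distinct_rev set_rev)
  moreover have "3 \<le> length ?C"
  proof (rule ccontr)
    assume "\<not> 3 \<le> length ?C"
    then have "P1 = []" "Q1 = []"
      by (simp_all add: Suc_le_eq)
    with sp(1) sq have "p' = p" "q' = q" by auto
    with cP cQ q' \<open>p \<noteq> q\<close> show False by (simp add: prod_eq_iff)
  qed
  ultimately show ?thesis
    using cyc by blast
qed

lemma geodesic_unique:
  assumes swap_closed: "\<And>e. e \<in> E \<Longrightarrow> prod.swap e \<in> E"
    and acyclic: "\<nexists>w es. 3 \<le> length es \<and> cpath E w w es \<and> distinct (map fst es)"
  shows "geodesic E u v P \<Longrightarrow> geodesic E u v Q \<Longrightarrow> P = Q"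
proof (induction P arbitrary: u Q)
  case Nil
  then show ?case
    unfolding geodesic_def by (metis cpath.simps(1) le_zero_eq length_0_conv list.size(3))
next
  case (Cons p P)
  have "length Q = length (p # P)"
    using Cons.prems unfolding geodesic_def by (meson le_antisym)
  then obtain q Q' where Q: "Q = q # Q'"
    by (cases Q) auto
  have cP: "cpath E u v (p # P)" and cQ: "cpath E u v (q # Q')"
    using Cons.prems Q unfolding geodesic_def by blast+
  show ?case
  proof (cases "p = q")
    case True
    have "cpath E u (snd p) [p]"
      using cP by simp
    then have "geodesic E (snd p) v P" "geodesic E (snd p) v Q'"
      using geodesic_append(2)[of E u v "[p]"] Cons.prems Q True by auto
    then show ?thesis
      using Cons.IH Q True by blast
  next
    case False
    have "distinct (u # map snd (p # P))" "distinct (u # map snd (q # Q'))"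
      using geodesic_distinct[OF Cons.prems(1)] geodesic_distinct[OF Cons.prems(2)[unfolded Q]]
      by simp_all
    with simple_cycle_of_branching_paths[OF swap_closed cP _ cQ] False acyclic show ?thesis
      by blast
  qed
qed

lemma geodesic_butlast:
  assumes "geodesic E u v (ps @ [f])" shows "geodesic E u (fst f) ps"
proof -
  have "cpath E u (fst f) ps"
    using assms unfolding geodesic_def cpath_append by auto
  with assms show ?thesis
    by (rule geodesic_append(1))
qed

lemma geodesic_snoc_end: "geodesic E u v (ps @ [f]) \<Longrightarrow> v = snd f"
  unfolding geodesic_def cpath_append by auto

lemma tree_edges_swap: "f \<in> tree_edges T \<Longrightarrow> prod.swap f \<in> tree_edges T"
  unfolding tree_edges_def by (auto simp: insert_commute)

lemma tree_edges_subset_Edge: "spanning_tree \<Delta> T \<Longrightarrow> tree_edges T \<subseteq> Edge \<Delta>"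
  unfolding spanning_tree_def tree_edges_def Edge_def by auto

lemma tree_path_edges:
  "spanning_tree \<Delta> T \<Longrightarrow> geodesic (tree_edges T) u v ps \<Longrightarrow> set ps \<subseteq> Edge \<Delta>"
  unfolding geodesic_def using cpath_set[of "tree_edges T" u v ps] tree_edges_subset_Edge[of \<Delta> T]
  by blast

lemma tgeod_eqI:
  assumes "spanning_tree \<Delta> T" and "geodesic (tree_edges T) u v P"
  shows "tgeod T u v = P"
proof -
  have "\<nexists>w es. 3 \<le> length es \<and> cpath (tree_edges T) w w es \<and> distinct (map fst es)"
    using assms(1) unfolding spanning_tree_def by blast
  with assms(2) have "(THE es. geodesic (tree_edges T) u v es) = P"
    by (blast intro: the_equality geodesic_unique[OF tree_edges_swap])
  then show ?thesis
    unfolding tgeod_def geodesic_def .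
qed

lemma geodesic_tgeod:
  assumes "spanning_tree \<Delta> T" and "u \<in> vertices \<Delta>" and "v \<in> vertices \<Delta>"
  shows "geodesic (tree_edges T) u v (tgeod T u v)"
proof -
  obtain P where "geodesic (tree_edges T) u v P"
    using assms geodesic_exists unfolding spanning_tree_def by metis
  with tgeod_eqI[OF assms(1)] show ?thesis by simp
qed

lemma length_tgeod_le_Ldiam:
  fixes \<Delta> :: "('v::finite) set set"
  assumes "u \<in> vertices \<Delta>" and "v \<in> vertices \<Delta>"
  shows "length (tgeod T u v) \<le> Ldiam \<Delta> T"
  unfolding Ldiam_def using assms by (intro Max_ge) (auto intro: finite_image_set2)

section \<open>Powers of tree paths\<close>

definition path_pow :: "('v \<times> 'v) list \<Rightarrow> int \<Rightarrow> 'v letter list" where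
  "path_pow ps n = concat (map (\<lambda>e. lpow e n) ps)"

lemma path_pow_Nil [simp]: "path_pow [] n = []"
  and path_pow_append [simp]: "path_pow (xs @ ys) n = path_pow xs n @ path_pow ys n"
  and path_pow_Cons [simp]: "path_pow (e # es) n = lpow e n @ path_pow es n"
  by (simp_all add: path_pow_def)

lemma lpow_one [simp]: "lpow e 1 = [(e, True)]"
  by (simp add: lpow_def)

lemma pn_geodesic:
  assumes "spanning_tree \<Delta> T" and "geodesic (tree_edges T) u v ps"
  shows "pn T n u v = path_pow ps n" and "pn T n v u = path_pow (rev_path ps) n"
  using tgeod_eqI[OF assms] tgeod_eqI[OF assms(1) geodesic_rev_path[OF tree_edges_swap assms(2)]]
  by (simp_all add: pn_def path_pow_def)

lemma Phi_Nil [simp]: "Phi T q n [] = []"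
  and Phi_append [simp]: "Phi T q n (u @ v) = Phi T q n u @ Phi T q n v"
  and Phi_Cons [simp]: "Phi T q n (a # w) = Phi_letter T q n a @ Phi T q n w"
  by (simp_all add: Phi_def)

lemma Phi_letter_tree_edge:
  assumes "spanning_tree \<Delta> T" and "geodesic (tree_edges T) q (snd f) (ps @ [f])"
  shows "Phi_letter T q n (f, True)
           = path_pow ps n @ lpow f (n + 1) @ path_pow (rev_path (ps @ [f])) n"
    and "Phi_letter T q n (prod.swap f, True)
           = path_pow (ps @ [f]) n @ lpow (prod.swap f) (n + 1) @ path_pow (rev_path ps) n"
  using pn_geodesic[OF assms] pn_geodesic[OF assms(1) geodesic_butlast[OF assms(2)]]
  by (simp_all add: Phi_letter_def)

lemma Area_lpow_swap_lpow:
  assumes "f \<in> Edge \<Delta>"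
  shows "Area (RH \<Delta>) (lpow (prod.swap f) k @ lpow f k) \<le> enat (nat \<bar>k\<bar>)"
proof -
  have "prod.swap f \<in> Edge \<Delta>"
    using assms unfolding Edge_def by (auto simp: insert_commute)
  then have "[(prod.swap f, True), (f, True)] \<in> RH \<Delta>"
    unfolding RH_def by force
  then have pos: "Area (RH \<Delta>) [(prod.swap f, True), (f, True)] \<le> 1"
    by (rule Area_relator)
  have "[(f, True), (prod.swap f, True)] \<in> RH \<Delta>"
    using assms unfolding RH_def by blast
  moreover have "inv_word [(prod.swap f, False), (f, False)] = [(f, True), (prod.swap f, True)]"
    by (simp add: inv_letter_def)
  ultimately have neg: "Area (RH \<Delta>) [(prod.swap f, False), (f, False)] \<le> 1"
    by (metis Area_inv_word Area_relator)
  show ?thesis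
    using Area_replicate_pair[OF pos] Area_replicate_pair[OF neg] by (simp add: lpow_def)
qed

lemma Area_path_pow_rev_path:
  assumes "set ps \<subseteq> Edge \<Delta>"
  shows "Area (RH \<Delta>) (path_pow (rev_path ps) n @ path_pow ps n) \<le> enat (length ps * nat \<bar>n\<bar>)"
  using assms
proof (induction ps)
  case Nil
  then show ?case by (simp add: zero_enat_def[symmetric])
next
  case (Cons f ps)
  have "Area (RH \<Delta>) (path_pow (rev_path (f # ps)) n @ path_pow (f # ps) n)
      = Area (RH \<Delta>) (path_pow (rev_path ps) n @ (lpow (prod.swap f) n @ lpow f n) @ path_pow ps n)"
    by simp
  also have "\<dots> \<le> Area (RH \<Delta>) (lpow (prod.swap f) n @ lpow f n)
                 + Area (RH \<Delta>) (path_pow (rev_path ps) n @ path_pow ps n)"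
    by (rule Area_insert_le)
  also have "\<dots> \<le> enat (nat \<bar>n\<bar>) + enat (length ps * nat \<bar>n\<bar>)"
    using Cons by (intro add_mono Area_lpow_swap_lpow) auto
  finally show ?case by simp
qed

lemma area_dist_Phi_path_pow:
  assumes st: "spanning_tree \<Delta> T" and "geodesic (tree_edges T) q v ps"
  shows "area_dist (RH \<Delta>) (Phi T q n (path_pow ps 1)) (path_pow ps (n + 1) @ path_pow (rev_path ps) n)
           \<le> enat (length ps ^ 2 * nat \<bar>n\<bar>)"
  using assms(2)
proof (induction ps arbitrary: v rule: rev_induct)
  case Nil
  then show ?case by (simp add: zero_enat_def[symmetric])
next
  case (snoc f ps)
  let ?R = "RH \<Delta>" and ?l = "length ps" and ?N = "nat \<bar>n\<bar>"
  let ?Y = "lpow f (n + 1) @ path_pow (rev_path (ps @ [f])) n"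
  have g: "geodesic (tree_edges T) q (snd f) (ps @ [f])"
    using snoc.prems geodesic_snoc_end by metis
  have Phi_snoc: "Phi T q n (path_pow (ps @ [f]) 1) = Phi T q n (path_pow ps 1) @ path_pow ps n @ ?Y"
    using Phi_letter_tree_edge(1)[OF st g] by simp
  have "area_dist ?R (Phi T q n (path_pow ps 1) @ path_pow ps n @ ?Y)
          (path_pow ps (n + 1) @ path_pow (rev_path ps) n @ path_pow ps n @ ?Y) \<le> enat (?l ^ 2 * ?N)"
    using area_dist_context_le[OF snoc.IH[OF geodesic_butlast[OF g]], of "[]" "path_pow ps n @ ?Y"]
    by simp
  moreover have "area_dist ?R (path_pow ps (n + 1) @ path_pow (rev_path ps) n @ path_pow ps n @ ?Y)
                   (path_pow (ps @ [f]) (n + 1) @ path_pow (rev_path (ps @ [f])) n) \<le> enat (?l * ?N)"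
    using area_dist_context_le[of ?R "path_pow (rev_path ps) n @ path_pow ps n" "[]" "enat (?l * ?N)"
        "path_pow ps (n + 1)" ?Y]
      Area_path_pow_rev_path[OF tree_path_edges[OF st geodesic_butlast[OF g]]]
    by simp
  ultimately have "area_dist ?R (Phi T q n (path_pow ps 1) @ path_pow ps n @ ?Y)
                     (path_pow (ps @ [f]) (n + 1) @ path_pow (rev_path (ps @ [f])) n)
                   \<le> enat (?l ^ 2 * ?N) + enat (?l * ?N)"
    by (rule area_dist_trans)
  also have "\<dots> \<le> enat (length (ps @ [f]) ^ 2 * ?N)"
    by (simp add: power2_eq_square algebra_simps)
  finally show ?case
    unfolding Phi_snoc .
qed

lemma area_dist_Phi_rev_path_pow:
  assumes st: "spanning_tree \<Delta> T" and "geodesic (tree_edges T) q v ps"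
  shows "area_dist (RH \<Delta>) (Phi T q n (path_pow (rev_path ps) 1)) (path_pow ps n @ path_pow (rev_path ps) (n + 1))
           \<le> enat (length ps ^ 2 * nat \<bar>n\<bar>)"
  using assms(2)
proof (induction ps arbitrary: v rule: rev_induct)
  case Nil
  then show ?case by (simp add: zero_enat_def[symmetric])
next
  case (snoc f ps)
  let ?R = "RH \<Delta>" and ?l = "length ps" and ?N = "nat \<bar>n\<bar>"
  let ?X = "path_pow (ps @ [f]) n @ lpow (prod.swap f) (n + 1)"
  have g: "geodesic (tree_edges T) q (snd f) (ps @ [f])"
    using snoc.prems geodesic_snoc_end by metis
  have Phi_snoc: "Phi T q n (path_pow (rev_path (ps @ [f])) 1)
      = ?X @ path_pow (rev_path ps) n @ Phi T q n (path_pow (rev_path ps) 1)"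
    using Phi_letter_tree_edge(2)[OF st g] by simp
  have "area_dist ?R (?X @ path_pow (rev_path ps) n @ Phi T q n (path_pow (rev_path ps) 1))
          (?X @ path_pow (rev_path ps) n @ path_pow ps n @ path_pow (rev_path ps) (n + 1))
          \<le> enat (?l ^ 2 * ?N)"
    using area_dist_context_le[OF snoc.IH[OF geodesic_butlast[OF g]],
        of "?X @ path_pow (rev_path ps) n" "[]"]
    by simp
  moreover have "area_dist ?R (?X @ path_pow (rev_path ps) n @ path_pow ps n @ path_pow (rev_path ps) (n + 1))
                   (path_pow (ps @ [f]) n @ path_pow (rev_path (ps @ [f])) (n + 1)) \<le> enat (?l * ?N)"
    using area_dist_context_le[of ?R "path_pow (rev_path ps) n @ path_pow ps n" "[]" "enat (?l * ?N)"
        ?X "path_pow (rev_path ps) (n + 1)"]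
      Area_path_pow_rev_path[OF tree_path_edges[OF st geodesic_butlast[OF g]]]
    by simp
  ultimately have "area_dist ?R (?X @ path_pow (rev_path ps) n @ Phi T q n (path_pow (rev_path ps) 1))
                     (path_pow (ps @ [f]) n @ path_pow (rev_path (ps @ [f])) (n + 1))
                   \<le> enat (?l ^ 2 * ?N) + enat (?l * ?N)"
    by (rule area_dist_trans)
  also have "\<dots> \<le> enat (length (ps @ [f]) ^ 2 * ?N)"
    by (simp add: power2_eq_square algebra_simps)
  finally show ?case
    unfolding Phi_snoc .
qed

lemma area_dist_Phi_succ_edge:
  "area_dist R (Phi T q (n + 1) [(e, True)])
     (pn T (n + 1) q (iota e) @ [(e, True)] @ inv_word (pn T (n + 1) q (iota e)))
   \<le> Area R (pn T (n + 1) q (iota e) @ lpow e (n + 1) @ pn T (n + 1) (tau e) q)"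
proof -
  let ?A = "pn T (n + 1) q (iota e)" and ?C = "pn T (n + 1) (tau e) q"
  have "area_dist R (Phi T q (n + 1) [(e, True)]) (?A @ lpow e (n + 1 + 1) @ ?C @ ?A @ inv_word ?A) = 0"
    using freely_equal_sym[OF freely_equal_cancel[of "?A @ lpow e (n + 1 + 1) @ ?C" ?A "[]"]]
    by (intro area_dist_freely_equal) (simp add: Phi_letter_def)
  moreover have "area_dist R (?A @ lpow e (n + 1 + 1) @ ?C @ ?A @ inv_word ?A) (?A @ [(e, True)] @ inv_word ?A)
                   \<le> Area R (?A @ lpow e (n + 1) @ ?C)"
    by (rule area_dist_lpow_shift)
  ultimately show ?thesis
    using area_dist_trans[of R _ _ 0] by fastforce
qed

lemma area_dist_Phi_we_conj_edge:
  assumes st: "spanning_tree \<Delta> T" and g: "geodesic (tree_edges T) q (iota e) ps"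
  shows "area_dist (RH \<Delta>) (Phi T q n (we T q e))
           (pn T (n + 1) q (iota e) @ [(e, True)] @ inv_word (pn T (n + 1) q (iota e)))
         \<le> enat (2 * length ps ^ 2 * nat \<bar>n\<bar> + length ps * nat \<bar>n\<bar>)
           + Area (RH \<Delta>) (pn T n q (iota e) @ lpow e n @ pn T n (tau e) q)
           + enat (length ps * nat \<bar>n + 1\<bar>)"
proof -
  let ?R = "RH \<Delta>" and ?k = "length ps" and ?N = "nat \<bar>n\<bar>"
  let ?A = "path_pow ps" and ?B = "path_pow (rev_path ps)" and ?C = "\<lambda>m. pn T m (tau e) q"
  have pn: "pn T m q (iota e) = ?A m" "pn T m (iota e) q = ?B m" for m
    using pn_geodesic[OF st g] by blast+
  have edges: "set ps \<subseteq> Edge \<Delta>"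
    by (rule tree_path_edges[OF st g])
  have Phi_we: "Phi T q n (we T q e) = Phi T q n (?A 1) @ (?A n @ lpow e (n + 1) @ ?C n) @ Phi T q n (?B 1)"
    by (simp add: we_def Phi_letter_def pn)
  have "area_dist ?R (Phi T q n (we T q e))
          ((?A (n + 1) @ ?B n) @ (?A n @ lpow e (n + 1) @ ?C n) @ (?A n @ ?B (n + 1)))
        \<le> enat (?k ^ 2 * ?N) + enat (?k ^ 2 * ?N)"
    unfolding Phi_we
    by (intro area_dist_sandwich_le area_dist_Phi_path_pow[OF st g] area_dist_Phi_rev_path_pow[OF st g])
  moreover have "area_dist ?R ((?A (n + 1) @ ?B n) @ (?A n @ lpow e (n + 1) @ ?C n) @ (?A n @ ?B (n + 1)))
                   (?A (n + 1) @ lpow e (n + 1) @ ?C n @ ?A n @ ?B (n + 1)) \<le> enat (?k * ?N)"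
    using area_dist_context_le[of ?R "?B n @ ?A n" "[]" "enat (?k * ?N)" "?A (n + 1)"]
      Area_path_pow_rev_path[OF edges]
    by simp
  moreover have "area_dist ?R (?A (n + 1) @ lpow e (n + 1) @ ?C n @ ?A n @ ?B (n + 1))
                   (?A (n + 1) @ [(e, True)] @ ?B (n + 1))
                 \<le> Area ?R (pn T n q (iota e) @ lpow e n @ pn T n (tau e) q)"
    using area_dist_lpow_shift by (simp add: pn)
  moreover have "area_dist ?R (?B (n + 1)) (inv_word (?A (n + 1))) \<le> enat (?k * nat \<bar>n + 1\<bar>)"
    unfolding area_dist_def using Area_path_pow_rev_path[OF edges] by simp
  then have "area_dist ?R (?A (n + 1) @ [(e, True)] @ ?B (n + 1))
               (?A (n + 1) @ [(e, True)] @ inv_word (?A (n + 1))) \<le> enat (?k * nat \<bar>n + 1\<bar>)"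
    using area_dist_context_le[of ?R _ _ _ "?A (n + 1) @ [(e, True)]" "[]"] by simp
  ultimately have "area_dist ?R (Phi T q n (we T q e)) (?A (n + 1) @ [(e, True)] @ inv_word (?A (n + 1)))
      \<le> enat (?k ^ 2 * ?N) + enat (?k ^ 2 * ?N) + enat (?k * ?N)
        + Area ?R (pn T n q (iota e) @ lpow e n @ pn T n (tau e) q) + enat (?k * nat \<bar>n + 1\<bar>)"
    by (blast intro: area_dist_trans)
  then show ?thesis
    by (simp add: pn mult_2 add_mult_distrib)
qed

lemma area_dist_Phi_succ_Phi_we:
  assumes "spanning_tree \<Delta> T" and "geodesic (tree_edges T) q (iota e) ps"
  shows "area_dist (RH \<Delta>) (Phi T q (n + 1) [(e, True)]) (Phi T q n (we T q e))
         \<le> Area (RH \<Delta>) (pn T (n + 1) q (iota e) @ lpow e (n + 1) @ pn T (n + 1) (tau e) q)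
           + Area (RH \<Delta>) (pn T n q (iota e) @ lpow e n @ pn T n (tau e) q)
           + enat (2 * length ps ^ 2 * nat \<bar>n\<bar> + length ps * nat \<bar>n\<bar> + length ps * nat \<bar>n + 1\<bar>)"
proof -
  have "area_dist (RH \<Delta>) (Phi T q (n + 1) [(e, True)]) (Phi T q n (we T q e))
      \<le> Area (RH \<Delta>) (pn T (n + 1) q (iota e) @ lpow e (n + 1) @ pn T (n + 1) (tau e) q)
        + (enat (2 * length ps ^ 2 * nat \<bar>n\<bar> + length ps * nat \<bar>n\<bar>)
           + Area (RH \<Delta>) (pn T n q (iota e) @ lpow e n @ pn T n (tau e) q)
           + enat (length ps * nat \<bar>n + 1\<bar>))"
    using area_dist_Phi_we_conj_edge[OF assms, of n]
    by (subst (asm) area_dist_sym) (rule area_dist_trans[OF area_dist_Phi_succ_edge])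
  then show ?thesis
    by (simp only: ac_simps plus_enat_simps(1)[symmetric])
qed

lemma quadratic_bound_arith:
  fixes K L k x y :: real
  assumes "0 \<le> K" "0 \<le> k" "k \<le> L" "0 \<le> x" "0 \<le> y" "y \<le> x + 1"
  shows "K * y\<^sup>2 + K * x\<^sup>2 + (2 * k\<^sup>2 * x + k * x + k * y)
           \<le> 2 * K * x\<^sup>2 + (3 * L\<^sup>2 + 2 * L + 2 * K) * x + L + K"
proof -
  have "K * y\<^sup>2 \<le> K * (x + 1)\<^sup>2"
    using assms by (intro mult_left_mono power_mono) auto
  moreover have "k\<^sup>2 * x \<le> L\<^sup>2 * x"
    using assms by (intro mult_right_mono power_mono) auto
  moreover have "k * x \<le> L * x" and "k * y \<le> L * (x + 1)"
    using assms by (auto intro: mult_right_mono mult_mono)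
  moreover have "0 \<le> L\<^sup>2 * x"
    using assms by simp
  ultimately show ?thesis
    by (simp add: power2_eq_square algebra_simps)
qed

theorem lemma4p9:
  fixes \<Delta> :: "('v::finite) set set" and T :: "'v set set" and q :: 'v and K :: real
  assumes "simplicial_complex \<Delta>"
    and "flag \<Delta>"
    and "simply_connected (realization \<Delta>)"
    and "spanning_tree \<Delta> T"
    and "q \<in> vertices \<Delta>"
    and "\<forall>e\<in>Edge \<Delta>. \<forall>n::int.
           ereal_of_enat (Area (RH \<Delta>) (pn T n q (iota e) @ lpow e n @ pn T n (tau e) q))
             \<le> ereal (K * (real_of_int \<bar>n\<bar>)\<^sup>2)"
  shows "\<forall>e\<in>Edge \<Delta>. \<forall>n::int.
           ereal_of_enat (Area (RH \<Delta>) (Phi T q (n + 1) [(e, True)] @ inv_word (Phi T q n (we T q e))))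
             \<le> ereal (2 * K * (real_of_int \<bar>n\<bar>)\<^sup>2
                 + (3 * (real (Ldiam \<Delta> T))\<^sup>2 + 2 * real (Ldiam \<Delta> T) + 2 * K) * real_of_int \<bar>n\<bar>
                 + real (Ldiam \<Delta> T) + K)"
proof (intro ballI allI)
  fix e and n :: int
  assume e: "e \<in> Edge \<Delta>"
  let ?H = "\<lambda>m. Area (RH \<Delta>) (pn T m q (iota e) @ lpow e m @ pn T m (tau e) q)"
  let ?k = "real (length (tgeod T q (iota e)))" and ?L = "real (Ldiam \<Delta> T)"
  let ?x = "real_of_int \<bar>n\<bar>" and ?y = "real_of_int \<bar>n + 1\<bar>"
  have "iota e \<in> vertices \<Delta>"
    using e unfolding Edge_def vertices_def by auto
  then have g: "geodesic (tree_edges T) q (iota e) (tgeod T q (iota e))" and "?k \<le> ?L"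
    using geodesic_tgeod[OF assms(4,5)] length_tgeod_le_Ldiam[OF assms(5)] by auto
  have H: "ereal_of_enat (?H m) \<le> ereal (K * (real_of_int \<bar>m\<bar>)\<^sup>2)" for m
    using assms(6) e by blast
  then have "0 \<le> K"
    using order_trans[OF ereal_of_enat_nonneg H[of 1]] by simp
  have "ereal_of_enat (Area (RH \<Delta>) (Phi T q (n + 1) [(e, True)] @ inv_word (Phi T q n (we T q e))))
      \<le> ereal_of_enat (?H (n + 1)) + ereal_of_enat (?H n) + ereal (2 * ?k\<^sup>2 * ?x + ?k * ?x + ?k * ?y)"
    using area_dist_Phi_succ_Phi_we[OF assms(4) g, of n] unfolding area_dist_def
    by (simp only: ereal_of_enat_le_iff[symmetric] ereal_of_enat_add) simp
  also have "\<dots> \<le> ereal (K * ?y\<^sup>2) + ereal (K * ?x\<^sup>2) + ereal (2 * ?k\<^sup>2 * ?x + ?k * ?x + ?k * ?y)"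
    by (intro add_mono H order_refl)
  also have "\<dots> \<le> ereal (2 * K * ?x\<^sup>2 + (3 * ?L\<^sup>2 + 2 * ?L + 2 * K) * ?x + ?L + K)"
    using quadratic_bound_arith[of K ?k ?L ?x ?y] \<open>0 \<le> K\<close> \<open>?k \<le> ?L\<close> by simp
  finally show "ereal_of_enat (Area (RH \<Delta>) (Phi T q (n + 1) [(e, True)] @ inv_word (Phi T q n (we T q e))))
      \<le> ereal (2 * K * ?x\<^sup>2 + (3 * ?L\<^sup>2 + 2 * ?L + 2 * K) * ?x + ?L + K)" .
qed

end
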